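(* Let $1<p<\infty$ and $\theta>0$. There exists a weight function $a$ on $\mathbb R$ such that the dual space $(L_a^{p),\theta}(\mathbb R))^*$ is not canonically isometric to the associate space $(L_a^{p),\theta}(\mathbb R))'$.
   Context: A weight function on $\mathbb R^n$ is a positive, measurable, locally integrable function (vanishing at most on a set of measure zero). For $1<p<\infty$, $\theta\ge 0$ and a weight $a$, the generalized grand Lebesgue space $L_a^{p),\theta}(\mathbb R^n)$ is the space of measurable $f$ with $\|f\|_{L_a^{p),\theta}}=\sup_{0<\varepsilon\le p-1}\varepsilon^{\theta}\Big(\int_{\mathbb R^n}|f(x)|^{p-\varepsilon}a(x)^{\varepsilon/p}\,dx\Big)^{1/(p-\varepsilon)}<\infty$. The associate space $X'$ of a Banach function space $X$ is the space of measurable $g$ with $\|g\|_{X'}=\sup\{\int|fg|\,dx:\|f\|_X\le1\}<\infty$; it embeds canonically into $X^*$ via $g\mapsto(f\mapsto\int fg\,dx)$. *)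

theory Defs
  imports "HOL-Analysis.Analysis"
begin

definition weight :: "(real \<Rightarrow> real) \<Rightarrow> bool" where
  "weight a \<longleftrightarrow> a \<in> borel_measurable lebesgue \<and> (\<forall>x. 0 \<le> a x)
     \<and> (AE x in lebesgue. 0 < a x)
     \<and> (\<forall>K. compact K \<longrightarrow> set_integrable lebesgue K a)"

definition gl_term :: "real \<Rightarrow> real \<Rightarrow> (real \<Rightarrow> real) \<Rightarrow> (real \<Rightarrow> real) \<Rightarrow> real \<Rightarrow> real" where
  "gl_term p \<theta> a f \<epsilon> = \<epsilon> powr \<theta> *
     (\<integral>x. \<bar>f x\<bar> powr (p - \<epsilon>) * a x powr (\<epsilon> / p) \<partial>lebesgue) powr (1 / (p - \<epsilon>))"

definition in_GL :: "real \<Rightarrow> real \<Rightarrow> (real \<Rightarrow> real) \<Rightarrow> (real \<Rightarrow> real) \<Rightarrow> bool" where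
  "in_GL p \<theta> a f \<longleftrightarrow> f \<in> borel_measurable lebesgue \<and>
     (\<forall>\<epsilon>\<in>{0<..p-1}. integrable lebesgue (\<lambda>x. \<bar>f x\<bar> powr (p - \<epsilon>) * a x powr (\<epsilon> / p))) \<and>
     bdd_above (gl_term p \<theta> a f ` {0<..p-1})"

definition GL_norm :: "real \<Rightarrow> real \<Rightarrow> (real \<Rightarrow> real) \<Rightarrow> (real \<Rightarrow> real) \<Rightarrow> real" where
  "GL_norm p \<theta> a f = (SUP \<epsilon>\<in>{0<..p-1}. gl_term p \<theta> a f \<epsilon>)"

definition in_assoc :: "real \<Rightarrow> real \<Rightarrow> (real \<Rightarrow> real) \<Rightarrow> (real \<Rightarrow> real) \<Rightarrow> bool" where
  "in_assoc p \<theta> a g \<longleftrightarrow> g \<in> borel_measurable lebesgue \<and>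
     (\<forall>f. in_GL p \<theta> a f \<and> GL_norm p \<theta> a f \<le> 1 \<longrightarrow> integrable lebesgue (\<lambda>x. f x * g x)) \<and>
     bdd_above ((\<lambda>f. \<integral>x. \<bar>f x * g x\<bar> \<partial>lebesgue) ` {f. in_GL p \<theta> a f \<and> GL_norm p \<theta> a f \<le> 1})"

definition assoc_norm :: "real \<Rightarrow> real \<Rightarrow> (real \<Rightarrow> real) \<Rightarrow> (real \<Rightarrow> real) \<Rightarrow> real" where
  "assoc_norm p \<theta> a g = (SUP f\<in>{f. in_GL p \<theta> a f \<and> GL_norm p \<theta> a f \<le> 1}. \<integral>x. \<bar>f x * g x\<bar> \<partial>lebesgue)"

definition in_dual :: "real \<Rightarrow> real \<Rightarrow> (real \<Rightarrow> real) \<Rightarrow> ((real \<Rightarrow> real) \<Rightarrow> real) \<Rightarrow> bool" where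
  "in_dual p \<theta> a \<Phi> \<longleftrightarrow>
     (\<forall>f g. in_GL p \<theta> a f \<longrightarrow> in_GL p \<theta> a g \<longrightarrow> \<Phi> (\<lambda>x. f x + g x) = \<Phi> f + \<Phi> g) \<and>
     (\<forall>f c. in_GL p \<theta> a f \<longrightarrow> \<Phi> (\<lambda>x. c * f x) = c * \<Phi> f) \<and>
     (\<exists>C. \<forall>f. in_GL p \<theta> a f \<longrightarrow> \<bar>\<Phi> f\<bar> \<le> C * GL_norm p \<theta> a f)"

definition dual_norm :: "real \<Rightarrow> real \<Rightarrow> (real \<Rightarrow> real) \<Rightarrow> ((real \<Rightarrow> real) \<Rightarrow> real) \<Rightarrow> real" where
  "dual_norm p \<theta> a \<Phi> = (SUP f\<in>{f. in_GL p \<theta> a f \<and> GL_norm p \<theta> a f \<le> 1}. \<bar>\<Phi> f\<bar>)"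

definition canonically_isometric :: "real \<Rightarrow> real \<Rightarrow> (real \<Rightarrow> real) \<Rightarrow> bool" where
  "canonically_isometric p \<theta> a \<longleftrightarrow>
     (\<forall>g. in_assoc p \<theta> a g \<longrightarrow>
        in_dual p \<theta> a (\<lambda>f. \<integral>x. f x * g x \<partial>lebesgue) \<and>
        dual_norm p \<theta> a (\<lambda>f. \<integral>x. f x * g x \<partial>lebesgue) = assoc_norm p \<theta> a g) \<and>
     (\<forall>\<Phi>. in_dual p \<theta> a \<Phi> \<longrightarrow>
        (\<exists>g. in_assoc p \<theta> a g \<and> (\<forall>f. in_GL p \<theta> a f \<longrightarrow> \<Phi> f = (\<integral>x. f x * g x \<partial>lebesgue))))"

end

theory Submission
  imports Defs
begin

text \<open>For the weight \<open>a x = exp (- \<bar>x\<bar> powr (1 / (\<theta> * p)))\<close> one has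
  \<open>\<integral> a powr (\<epsilon> / p) = (\<epsilon> / p) powr (- \<theta> * p) * \<integral> a\<close>, so the \<open>\<epsilon>\<close>-th term of the norm of the
  constant function 1 stays bounded and bounded away from 0 as \<open>\<epsilon> \<rightarrow> 0\<close>. By Holder's inequality the
  functionals \<open>f \<mapsto> \<epsilon> powr \<theta> * B \<epsilon> powr (1 / (p - \<epsilon>) - 1) * \<integral> f * a powr (\<epsilon> / p)\<close>, with
  \<open>B \<epsilon> = \<integral> a powr (\<epsilon> / p)\<close>, are dominated by the \<open>\<epsilon>\<close>-th term of the norm; their limit along an
  ultrafilter finer than \<open>\<epsilon> \<rightarrow> 0+\<close> is therefore a bounded linear functional \<open>\<Phi>\<close> with \<open>\<Phi> 1 > 0\<close>.
  But \<open>\<Phi>\<close> vanishes on every \<open>f\<close> with \<open>\<bar>f\<bar> \<le> c * a\<close>, since the norm terms of such \<open>f\<close> are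
  \<open>O(\<epsilon> powr \<theta>)\<close>. If \<open>\<Phi>\<close> were integration against some \<open>g\<close> of the associate space, testing with
  \<open>sgn g * a\<close> would force \<open>g = 0\<close> almost everywhere, contradicting \<open>\<Phi> 1 > 0\<close>.\<close>

definition ultrafilter :: "'a filter \<Rightarrow> bool" where
  "ultrafilter U \<longleftrightarrow> U \<noteq> bot \<and> (\<forall>P. eventually P U \<or> eventually (\<lambda>x. \<not> P x) U)"

lemma ultrafilter_le_exists:
  fixes F :: "'a filter"
  assumes "F \<noteq> bot"
  shows "\<exists>U\<le>F. ultrafilter U"
proof -
  define A where "A = {G. G \<noteq> bot \<and> G \<le> F}"
  have po: "partial_order_on A (relation_of (\<lambda>G H. H \<le> G) A)"
    by (rule partial_order_on_relation_ofI) auto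
  have "\<exists>u\<in>A. \<forall>G\<in>C. u \<le> G" if C: "C \<in> Chains (relation_of (\<lambda>G H. H \<le> G) A)" for C
  proof (cases "C = {}")
    case True
    then show ?thesis using assms unfolding A_def by auto
  next
    case False
    have CA: "C \<subseteq> A" using Chains_relation_of[OF C] .
    have "\<exists>K\<in>C. K \<le> inf G H" if "G \<in> C" "H \<in> C" for G H
    proof -
      have "H \<le> G \<or> G \<le> H" using C that unfolding Chains_def relation_of_def by blast
      then show ?thesis using that by (metis inf.absorb_iff2 inf_commute order_refl)
    qed
    then have "eventually (\<lambda>_. False) (Inf C) \<longleftrightarrow> (\<exists>G\<in>C. eventually (\<lambda>_. False) G)"
      using False by (intro eventually_Inf_base) auto
    then have "Inf C \<noteq> bot" using CA unfolding A_def trivial_limit_def by auto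
    moreover have "Inf C \<le> F"
    proof -
      obtain G where "G \<in> C" using False by blast
      then show ?thesis using CA unfolding A_def by (blast intro: Inf_lower2)
    qed
    ultimately show ?thesis unfolding A_def by (blast intro: Inf_lower)
  qed
  then obtain U where U: "U \<in> A" and max: "\<And>G. G \<in> A \<Longrightarrow> G \<le> U \<Longrightarrow> G = U"
    using predicate_Zorn[OF po] by blast
  have "eventually P U" if "\<not> eventually (\<lambda>x. \<not> P x) U" for P
  proof -
    have "inf U (principal {x. P x}) \<noteq> bot"
      using that by (simp add: trivial_limit_def eventually_inf_principal)
    then have "inf U (principal {x. P x}) = U"
      using U by (intro max) (auto simp: A_def intro: le_infI1)
    moreover have "eventually P (inf U (principal {x. P x}))"
      by (simp add: eventually_inf_principal)
    ultimately show ?thesis by simp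
  qed
  then show ?thesis using U unfolding A_def ultrafilter_def by blast
qed

lemma ultrafilter_tendsto_Lim:
  fixes h :: "'a \<Rightarrow> real"
  assumes U: "ultrafilter U" and bounded: "eventually (\<lambda>x. \<bar>h x\<bar> \<le> M) U"
  shows "(h \<longlongrightarrow> Lim U h) U"
proof -
  have "U \<noteq> bot" using U by (simp add: ultrafilter_def)
  moreover have "eventually (\<lambda>y. y \<in> {-M..M}) (filtermap h U)"
    using bounded by (simp add: eventually_filtermap abs_le_iff eventually_mono)
  ultimately obtain l where l: "inf (nhds l) (filtermap h U) \<noteq> bot"
    using compact_filter[THEN iffD1, OF compact_Icc] by (metis filtermap_bot_iff)
  have "(h \<longlongrightarrow> l) U"
  proof (rule topological_tendstoI)
    fix S assume "open S" "l \<in> S"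
    then have S: "eventually (\<lambda>y. y \<in> S) (nhds l)" by (rule eventually_nhds_in_open)
    show "eventually (\<lambda>x. h x \<in> S) U"
    proof (rule ccontr)
      assume "\<not> eventually (\<lambda>x. h x \<in> S) U"
      with U have "eventually (\<lambda>y. y \<notin> S) (filtermap h U)"
        by (auto simp: ultrafilter_def eventually_filtermap)
      with S have "eventually (\<lambda>_. False) (inf (nhds l) (filtermap h U))"
        unfolding eventually_inf by blast
      with l show False by (simp add: trivial_limit_def)
    qed
  qed
  with \<open>U \<noteq> bot\<close> show ?thesis by (simp add: tendsto_Lim)
qed

lemma integrable_mult_weight:
  fixes f w :: "'a \<Rightarrow> real"
  assumes q: "1 \<le> q" and f_meas: "f \<in> borel_measurable M" and w_nonneg: "\<And>x. 0 \<le> w x"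
    and w_int: "integrable M w" and fq_int: "integrable M (\<lambda>x. \<bar>f x\<bar> powr q * w x)"
  shows "integrable M (\<lambda>x. f x * w x)"
proof (rule Bochner_Integration.integrable_bound)
  show "integrable M (\<lambda>x. \<bar>f x\<bar> powr q * w x + w x)"
    using fq_int w_int by (rule Bochner_Integration.integrable_add)
  show "(\<lambda>x. f x * w x) \<in> borel_measurable M"
    using f_meas borel_measurable_integrable[OF w_int] by measurable
  have "\<bar>f x\<bar> \<le> \<bar>f x\<bar> powr q + 1" for x
  proof (cases "\<bar>f x\<bar> \<le> 1")
    case False
    then have "\<bar>f x\<bar> powr 1 \<le> \<bar>f x\<bar> powr q" using q by (intro powr_mono) auto
    then show ?thesis using False by simp
  qed (use powr_ge_zero[of "\<bar>f x\<bar>" q] in linarith)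
  then have "\<bar>f x\<bar> * w x \<le> (\<bar>f x\<bar> powr q + 1) * w x" for x
    using w_nonneg by (intro mult_right_mono) auto
  then show "AE x in M. norm (f x * w x) \<le> norm (\<bar>f x\<bar> powr q * w x + w x)"
    using w_nonneg by (intro AE_I2) (simp add: abs_mult distrib_right)
qed

lemma weighted_Holder_inequality:
  fixes f w :: "'a \<Rightarrow> real"
  assumes q: "1 < q" and f_meas: "f \<in> borel_measurable M" and w_nonneg: "\<And>x. 0 \<le> w x"
    and w_int: "integrable M w" and fq_int: "integrable M (\<lambda>x. \<bar>f x\<bar> powr q * w x)"
  shows "(\<integral>x. \<bar>f x\<bar> * w x \<partial>M) \<le> (\<integral>x. \<bar>f x\<bar> powr q * w x \<partial>M) powr (1/q) * (\<integral>x. w x \<partial>M) powr (1 - 1/q)"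
proof -
  define A where "A = (\<integral>x. \<bar>f x\<bar> powr q * w x \<partial>M)"
  define B where "B = (\<integral>x. w x \<partial>M)"
  have fw_int: "integrable M (\<lambda>x. \<bar>f x\<bar> * w x)"
    using integrable_abs[OF integrable_mult_weight[OF _ f_meas w_nonneg w_int fq_int]] q w_nonneg
    by (simp add: abs_mult)
  have "AE x in M. 0 \<le> \<bar>f x\<bar> powr q * w x" and "AE x in M. 0 \<le> w x"
    using w_nonneg by auto
  then have A_eq_0: "A = 0 \<longleftrightarrow> (AE x in M. \<bar>f x\<bar> powr q * w x = 0)"
    and B_eq_0: "B = 0 \<longleftrightarrow> (AE x in M. w x = 0)"
    unfolding A_def B_def using fq_int w_int by (simp_all add: integral_nonneg_eq_0_iff_AE)
  show ?thesis
  proof (cases "A = 0 \<or> B = 0")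
    case True
    then have "AE x in M. \<bar>f x\<bar> * w x = 0"
      unfolding A_eq_0 B_eq_0 by (auto elim: AE_mp)
    then show ?thesis by (simp add: integral_eq_zero_AE)
  next
    case False
    moreover have "0 \<le> A" "0 \<le> B"
      unfolding A_def B_def using w_nonneg by (auto intro!: integral_nonneg_AE)
    ultimately have A: "0 < A" and B: "0 < B" by auto
    define q' where "q' = q / (q - 1)"
    have q': "1 < q'" "1/q + 1/q' = 1" "(1 - 1/q) * q' = 1"
      using q unfolding q'_def by (auto simp: field_simps)
    define \<alpha> where "\<alpha> = A powr (1/q)"
    define \<beta> where "\<beta> = B powr (1 - 1/q)"
    have "0 < \<alpha>" "0 < \<beta>" "\<alpha> powr q = A" "\<beta> powr q' = B"
      unfolding \<alpha>_def \<beta>_def using A B q q' by (auto simp: powr_powr)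
    have Young: "\<bar>f x\<bar> * w x / (\<alpha> * \<beta>) \<le> \<bar>f x\<bar> powr q * w x / (q * A) + w x / (q' * B)" for x
    proof -
      have "(\<bar>f x\<bar> / \<alpha>) * (1 / \<beta>) \<le> (\<bar>f x\<bar> / \<alpha>) powr q / q + (1 / \<beta>) powr q' / q'"
        using q q' \<open>0 < \<alpha>\<close> \<open>0 < \<beta>\<close> by (intro Youngs_inequality) auto
      also have "\<dots> = \<bar>f x\<bar> powr q / (q * A) + 1 / (q' * B)"
        using \<open>0 < \<alpha>\<close> \<open>0 < \<beta>\<close> \<open>\<alpha> powr q = A\<close> \<open>\<beta> powr q' = B\<close> by (simp add: powr_divide mult.commute)
      finally show ?thesis
        using w_nonneg[of x] by (auto dest: mult_right_mono[of _ _ "w x"] simp: field_simps)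
    qed
    have "(\<integral>x. \<bar>f x\<bar> * w x \<partial>M) / (\<alpha> * \<beta>) = (\<integral>x. \<bar>f x\<bar> * w x / (\<alpha> * \<beta>) \<partial>M)"
      by simp
    also have "\<dots> \<le> (\<integral>x. \<bar>f x\<bar> powr q * w x / (q * A) + w x / (q' * B) \<partial>M)"
      using fw_int fq_int w_int Young by (intro integral_mono) auto
    also have "\<dots> = A / (q * A) + B / (q' * B)"
      using fq_int w_int unfolding A_def B_def by simp
    also have "\<dots> = 1" using A B q' by (simp add: field_simps)
    finally show ?thesis
      using \<open>0 < \<alpha>\<close> \<open>0 < \<beta>\<close> unfolding \<alpha>_def \<beta>_def A_def B_def by (simp add: field_simps)
  qed
qed

lemma divide_between_min_max:
  fixes x d :: real
  assumes "1 \<le> d"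
  shows "min x 0 \<le> x / d" and "x / d \<le> max x 0"
  using assms by (auto simp: min_def max_def divide_le_eq le_divide_eq mult_le_cancel_left1 mult_le_cancel_left2)

lemma integral_lebesgue_pos:
  fixes f :: "'a::euclidean_space \<Rightarrow> real"
  assumes f_int: "integrable lebesgue f" and f_pos: "\<And>x. 0 < f x"
  shows "0 < integral\<^sup>L lebesgue f"
proof -
  have "integral\<^sup>L lebesgue f \<noteq> 0"
  proof
    assume "integral\<^sup>L lebesgue f = 0"
    then have "AE x in lebesgue. f x = 0"
      using f_pos by (subst (asm) integral_nonneg_eq_0_iff_AE[OF f_int]) (auto intro: less_imp_le)
    then have "AE x in lebesgue. x \<in> ({} :: 'a set)"
      by (rule eventually_mono) (metis f_pos less_irrefl)
    then show False using mem_closed_if_AE_lebesgue[of "{}"] by blast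
  qed
  moreover have "0 \<le> integral\<^sup>L lebesgue f"
    using f_pos by (intro integral_nonneg_AE) (auto intro: less_imp_le)
  ultimately show ?thesis by simp
qed

lemma exp_neg_abs_powr_le_inverse_square:
  fixes y g :: real and n :: nat
  assumes "0 < g" and n: "2 \<le> real n * g" and y: "1 \<le> \<bar>y\<bar>"
  shows "exp (- (\<bar>y\<bar> powr g)) \<le> real n ^ n / y\<^sup>2"
proof -
  have "0 < n" using n by (cases n) auto
  have "\<bar>y\<bar> powr g / n \<le> exp (\<bar>y\<bar> powr g / n)"
    using exp_ge_add_one_self[of "\<bar>y\<bar> powr g / n"] by linarith
  then have "(\<bar>y\<bar> powr g / n) ^ n \<le> exp (\<bar>y\<bar> powr g / n) ^ n"
    by (intro power_mono) auto
  also have "\<dots> = exp (\<bar>y\<bar> powr g)"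
    using \<open>0 < n\<close> by (simp add: exp_of_nat_mult[symmetric])
  also have "(\<bar>y\<bar> powr g / n) ^ n = \<bar>y\<bar> powr (n * g) / real n ^ n"
    using y by (simp add: power_divide powr_realpow[symmetric] powr_powr mult.commute)
  moreover have "y\<^sup>2 \<le> \<bar>y\<bar> powr (n * g)"
    using powr_mono[OF n, of "\<bar>y\<bar>"] y by (simp add: powr_numeral)
  ultimately have "y\<^sup>2 \<le> exp (\<bar>y\<bar> powr g) * real n ^ n"
    using \<open>0 < n\<close> by (simp add: field_simps)
  then show ?thesis
    using y \<open>0 < n\<close> by (simp add: exp_minus field_simps)
qed

lemma borel_measurable_exp_neg_abs_powr [measurable]:
  "(\<lambda>x::real. exp (- (\<bar>x\<bar> powr g))) \<in> borel_measurable lebesgue"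
  by (rule measurable_completion) simp

lemma integrable_exp_neg_abs_powr:
  fixes g :: real
  assumes g: "0 < g"
  shows "integrable lebesgue (\<lambda>x::real. exp (- (\<bar>x\<bar> powr g)))"
proof -
  define n :: nat where "n = nat \<lceil>2 / g\<rceil>"
  have "2 / g \<le> real n" unfolding n_def by linarith
  then have n: "2 \<le> real n * g" using g by (simp add: field_simps)
  define tail where "tail = (\<lambda>x::real. indicator {1..} x * (1 / x\<^sup>2) :: real)"
  have tail_int: "integrable lebesgue tail"
  proof -
    have "((\<lambda>x::real. 1 / x ^ 2) has_integral 1 / (real (2 - 1) * 1 ^ (2 - 1))) {1..}"
      by (rule has_integral_inverse_power_to_inf) auto
    then have "(\<lambda>x::real. 1 / x\<^sup>2) absolutely_integrable_on {1..}"
      by (intro nonnegative_absolutely_integrable_1) auto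
    then show ?thesis by (simp add: set_integrable_def tail_def)
  qed
  define m where "m = (\<lambda>x. indicator {-1..1} x + real n ^ n * (tail x + tail (- x)))"
  have center_int: "integrable lebesgue (indicator {-1..1::real} :: real \<Rightarrow> real)"
    by (simp add: integrable_indicator_iff)
  have "integrable lebesgue (\<lambda>x. tail (- x))"
    using lebesgue_integrable_real_affine[OF tail_int, of "-1" 0] by simp
  note tails_int = Bochner_Integration.integrable_add[OF tail_int this]
  have m_int: "integrable lebesgue m"
    unfolding m_def
    using Bochner_Integration.integrable_add[OF center_int integrable_mult_right[OF tails_int]] .
  have bound: "exp (- (\<bar>x\<bar> powr g)) \<le> m x" for x
  proof (cases "\<bar>x\<bar> \<le> 1")
    case True
    have "0 \<le> tail y" for y by (simp add: tail_def)
    then have "0 \<le> real n ^ n * (tail x + tail (- x))" by simp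
    moreover have "indicator {-1..1} x = (1::real)" using True by (auto simp: indicator_def)
    ultimately have "1 \<le> m x" by (simp add: m_def)
    moreover have "exp (- (\<bar>x\<bar> powr g)) \<le> 1" by simp
    ultimately show ?thesis by linarith
  next
    case False
    then have "tail x + tail (- x) = 1 / x\<^sup>2" by (auto simp: tail_def indicator_def)
    moreover have "indicator {-1..1} x = (0::real)" using False by (auto simp: indicator_def)
    ultimately have "m x = real n ^ n / x\<^sup>2" by (simp add: m_def)
    then show ?thesis using False by (simp add: exp_neg_abs_powr_le_inverse_square[OF g n])
  qed
  show ?thesis
  proof (rule Bochner_Integration.integrable_bound[OF m_int])
    show "AE x in lebesgue. norm (exp (- (\<bar>x\<bar> powr g))) \<le> norm (m x)"
      using bound by (intro AE_I2) (simp add: order_trans[OF _ abs_ge_self])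
  qed simp
qed

lemma
  fixes g s :: real
  assumes g: "0 < g" and s: "0 < s"
  shows integrable_exp_neg_abs_powr_powr: "integrable lebesgue (\<lambda>x. exp (- (\<bar>x\<bar> powr g)) powr s)"
    and integral_exp_neg_abs_powr_powr:
      "(\<integral>x. exp (- (\<bar>x\<bar> powr g)) powr s \<partial>lebesgue) = s powr (- 1 / g) * (\<integral>x. exp (- (\<bar>x\<bar> powr g)) \<partial>lebesgue)"
proof -
  define c where "c = s powr (- 1 / g)"
  have "0 < c" unfolding c_def using s by simp
  have "c powr g = s powr (- 1)"
    unfolding c_def using g s by (simp only: powr_powr) simp
  then have "s * \<bar>c * y\<bar> powr g = \<bar>y\<bar> powr g" for y
    using s \<open>0 < c\<close> by (simp add: abs_mult powr_mult powr_minus)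
  then have rescale: "exp (- (\<bar>0 + c * y\<bar> powr g)) powr s = exp (- (\<bar>y\<bar> powr g))" for y
    by (simp add: powr_def)
  show "integrable lebesgue (\<lambda>x. exp (- (\<bar>x\<bar> powr g)) powr s)"
    using lebesgue_integrable_real_affine_iff[of c "\<lambda>x. exp (- (\<bar>x\<bar> powr g)) powr s" 0]
      \<open>0 < c\<close> integrable_exp_neg_abs_powr[OF g]
    by (simp only: rescale)
  have "(\<integral>x. exp (- (\<bar>x\<bar> powr g)) powr s \<partial>lebesgue)
      = \<bar>c\<bar> *\<^sub>R (\<integral>y. exp (- (\<bar>0 + c * y\<bar> powr g)) powr s \<partial>lebesgue)"
    using \<open>0 < c\<close> by (intro lebesgue_integral_real_affine) simp
  then show "(\<integral>x. exp (- (\<bar>x\<bar> powr g)) powr s \<partial>lebesgue) = s powr (- 1 / g) * (\<integral>x. exp (- (\<bar>x\<bar> powr g)) \<partial>lebesgue)"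
    using \<open>0 < c\<close> by (simp only: rescale) (simp add: c_def)
qed

locale grand_Lebesgue_weight =
  fixes p \<theta> :: real and a :: "real \<Rightarrow> real"
  assumes p_gt_1: "1 < p" and theta_pos: "0 < \<theta>"
    and weight_measurable [measurable]: "a \<in> borel_measurable lebesgue"
    and weight_pos: "\<And>x. 0 < a x" and weight_le_1: "\<And>x. a x \<le> 1"
    and integrable_weight_powr: "\<And>s. 0 < s \<Longrightarrow> integrable lebesgue (\<lambda>x. a x powr s)"
begin

lemma integrable_weight: "integrable lebesgue a"
  using integrable_weight_powr[of 1] weight_pos by (simp add: less_imp_le)

lemma weight_a: "weight a"
  unfolding weight_def
proof (intro conjI allI impI)
  fix K :: "real set" assume "compact K"
  then show "set_integrable lebesgue K a"
    unfolding set_integrable_def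
    using lmeasurable_compact by (blast intro: integrable_mult_indicator integrable_weight)
qed (use weight_pos in \<open>auto intro: less_imp_le\<close>)

definition weight_mass :: "real \<Rightarrow> real" where
  "weight_mass \<epsilon> = (\<integral>x. a x powr (\<epsilon> / p) \<partial>lebesgue)"

lemma weight_mass_pos: "0 < \<epsilon> \<Longrightarrow> 0 < weight_mass \<epsilon>"
  unfolding weight_mass_def using p_gt_1 weight_pos
  by (intro integral_lebesgue_pos integrable_weight_powr) (auto simp: less_imp_neq[symmetric])

text \<open>The normalisation makes Holder's inequality sharp at \<open>f = 1\<close>.\<close>
definition approx_functional :: "real \<Rightarrow> (real \<Rightarrow> real) \<Rightarrow> real" where
  "approx_functional \<epsilon> f = \<epsilon> powr \<theta> * weight_mass \<epsilon> powr (1 / (p - \<epsilon>) - 1)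
     * (\<integral>x. f x * a x powr (\<epsilon> / p) \<partial>lebesgue)"

lemma in_GL_integrable_mult_weight_powr:
  assumes f: "in_GL p \<theta> a f" and \<epsilon>: "0 < \<epsilon>" "\<epsilon> \<le> p - 1"
  shows "integrable lebesgue (\<lambda>x. f x * a x powr (\<epsilon> / p))"
proof (rule integrable_mult_weight[where q = "p - \<epsilon>"])
  show "integrable lebesgue (\<lambda>x. a x powr (\<epsilon> / p))"
    using \<epsilon> p_gt_1 by (intro integrable_weight_powr) simp
qed (use f \<epsilon> in \<open>auto simp: in_GL_def\<close>)

lemma abs_approx_functional_le_gl_term:
  assumes f: "in_GL p \<theta> a f" and \<epsilon>: "0 < \<epsilon>" "\<epsilon> < p - 1"
  shows "\<bar>approx_functional \<epsilon> f\<bar> \<le> gl_term p \<theta> a f \<epsilon>"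
proof -
  define q where "q = p - \<epsilon>"
  define A where "A = (\<integral>x. \<bar>f x\<bar> powr q * a x powr (\<epsilon> / p) \<partial>lebesgue)"
  define B where "B = weight_mass \<epsilon>"
  have "0 < B" unfolding B_def using weight_mass_pos \<epsilon> by simp
  have "\<bar>\<integral>x. f x * a x powr (\<epsilon> / p) \<partial>lebesgue\<bar> \<le> (\<integral>x. \<bar>f x\<bar> * a x powr (\<epsilon> / p) \<partial>lebesgue)"
    using integral_abs_bound[of lebesgue "\<lambda>x. f x * a x powr (\<epsilon> / p)"] by (simp add: abs_mult)
  also have "\<dots> \<le> A powr (1/q) * B powr (1 - 1/q)"
    unfolding A_def B_def weight_mass_def q_def
  proof (rule weighted_Holder_inequality)
    show "integrable lebesgue (\<lambda>x. a x powr (\<epsilon> / p))"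
      using \<epsilon> p_gt_1 by (intro integrable_weight_powr) simp
  qed (use f \<epsilon> in \<open>auto simp: in_GL_def\<close>)
  finally have Holder: "\<bar>\<integral>x. f x * a x powr (\<epsilon> / p) \<partial>lebesgue\<bar> \<le> A powr (1/q) * B powr (1 - 1/q)" .
  have "\<bar>approx_functional \<epsilon> f\<bar> = \<epsilon> powr \<theta> * B powr (1/q - 1) * \<bar>\<integral>x. f x * a x powr (\<epsilon> / p) \<partial>lebesgue\<bar>"
    unfolding approx_functional_def B_def q_def by (simp add: abs_mult)
  also have "\<dots> \<le> \<epsilon> powr \<theta> * B powr (1/q - 1) * (A powr (1/q) * B powr (1 - 1/q))"
    by (intro mult_left_mono Holder) auto
  also have "\<dots> = \<epsilon> powr \<theta> * A powr (1/q) * (B powr (1/q - 1) * B powr (1 - 1/q))"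
    by (simp add: algebra_simps)
  also have "B powr (1/q - 1) * B powr (1 - 1/q) = 1"
    using \<open>0 < B\<close> by (simp add: powr_add[symmetric])
  finally show ?thesis
    unfolding gl_term_def A_def q_def by simp
qed

lemma approx_functional_one:
  assumes "0 < \<epsilon>"
  shows "approx_functional \<epsilon> (\<lambda>x. 1) = gl_term p \<theta> a (\<lambda>x. 1) \<epsilon>"
proof -
  have "weight_mass \<epsilon> powr (1 / (p - \<epsilon>) - 1) * weight_mass \<epsilon> = weight_mass \<epsilon> powr (1 / (p - \<epsilon>))"
    using weight_mass_pos[OF assms] by (simp add: powr_diff)
  then show ?thesis
    unfolding approx_functional_def gl_term_def by (simp add: weight_mass_def[symmetric] mult.assoc)
qed

lemma dominated_powr_le:
  assumes dom: "\<bar>f x\<bar> \<le> c * a x" and q: "1 \<le> q" and "0 \<le> t"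
  shows "\<bar>f x\<bar> powr q * a x powr t \<le> c powr q * a x"
proof -
  have "0 < a x" "a x \<le> 1"
    using weight_pos weight_le_1 by auto
  moreover have "0 \<le> c * a x"
    using dom abs_ge_zero order_trans by blast
  ultimately have "0 \<le> c"
    by (simp add: zero_le_mult_iff)
  have "\<bar>f x\<bar> powr q \<le> (c * a x) powr q"
    using q dom by (intro powr_mono2) auto
  also have "\<dots> = c powr q * a x powr q"
    using \<open>0 < a x\<close> \<open>0 \<le> c\<close> by (simp add: powr_mult)
  also have "\<dots> \<le> c powr q * a x"
    using \<open>0 < a x\<close> \<open>a x \<le> 1\<close> q by (intro mult_left_mono powr_le_one_le) auto
  finally have "\<bar>f x\<bar> powr q \<le> c powr q * a x" .
  moreover have "a x powr t \<le> 1"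
    using \<open>0 < a x\<close> \<open>a x \<le> 1\<close> \<open>0 \<le> t\<close> by (intro powr_le1) auto
  ultimately show ?thesis
    by (meson mult_left_le order_trans powr_ge_zero)
qed

lemma
  assumes f_meas: "f \<in> borel_measurable lebesgue" and c: "0 \<le> c"
    and dom: "\<And>x. \<bar>f x\<bar> \<le> c * a x" and \<epsilon>: "0 < \<epsilon>" "\<epsilon> \<le> p - 1"
  shows integrable_dominated_powr:
      "integrable lebesgue (\<lambda>x. \<bar>f x\<bar> powr (p - \<epsilon>) * a x powr (\<epsilon> / p))"
    and gl_term_dominated_le:
      "gl_term p \<theta> a f \<epsilon> \<le> \<epsilon> powr \<theta> * c * max 1 (\<integral>x. a x \<partial>lebesgue)"
proof -
  define q where "q = p - \<epsilon>"
  have q: "1 \<le> q" unfolding q_def using \<epsilon> by simp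
  have pointwise: "\<bar>f x\<bar> powr q * a x powr (\<epsilon> / p) \<le> c powr q * a x" for x
    using \<epsilon> p_gt_1 by (intro dominated_powr_le dom q) auto
  have bound_int: "integrable lebesgue (\<lambda>x. c powr q * a x)"
    using integrable_weight by (rule integrable_mult_right)
  show fq_int: "integrable lebesgue (\<lambda>x. \<bar>f x\<bar> powr (p - \<epsilon>) * a x powr (\<epsilon> / p))"
  proof (rule Bochner_Integration.integrable_bound[OF bound_int])
    show "AE x in lebesgue. norm (\<bar>f x\<bar> powr (p - \<epsilon>) * a x powr (\<epsilon> / p)) \<le> norm (c powr q * a x)"
      using pointwise weight_pos unfolding q_def by (intro AE_I2) (simp add: less_imp_le)
  qed (use f_meas in measurable)
  define A where "A = (\<integral>x. \<bar>f x\<bar> powr q * a x powr (\<epsilon> / p) \<partial>lebesgue)"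
  define M where "M = (\<integral>x. a x \<partial>lebesgue)"
  have "0 < M" unfolding M_def using integrable_weight weight_pos by (rule integral_lebesgue_pos)
  have "0 \<le> A" unfolding A_def by (intro integral_nonneg_AE) auto
  moreover have "A \<le> c powr q * M"
    unfolding A_def M_def using fq_int bound_int pointwise unfolding q_def
    by (subst integral_mult_right_zero[symmetric]) (rule integral_mono)
  ultimately have "A powr (1/q) \<le> (c powr q * M) powr (1/q)"
    using q by (intro powr_mono2) auto
  also have "\<dots> = c * M powr (1/q)"
    using c q \<open>0 < M\<close> by (simp add: powr_mult powr_powr)
  also have "M powr (1/q) \<le> max 1 M"
    using \<open>0 < M\<close> q by (cases "M \<le> 1") (auto intro: powr_le1 order_trans[OF powr_mono[of "1/q" 1]])
  then have "c * M powr (1/q) \<le> c * max 1 M"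
    using c by (rule mult_left_mono)
  finally show "gl_term p \<theta> a f \<epsilon> \<le> \<epsilon> powr \<theta> * c * max 1 (\<integral>x. a x \<partial>lebesgue)"
    unfolding gl_term_def A_def M_def q_def by (simp add: mult.assoc mult_left_mono)
qed

lemma
  assumes f_meas: "f \<in> borel_measurable lebesgue" and c: "0 \<le> c"
    and dom: "\<And>x. \<bar>f x\<bar> \<le> c * a x"
  shows in_GL_dominated: "in_GL p \<theta> a f"
    and GL_norm_dominated_le: "GL_norm p \<theta> a f \<le> (p - 1) powr \<theta> * c * max 1 (\<integral>x. a x \<partial>lebesgue)"
proof -
  have gl_le: "gl_term p \<theta> a f \<epsilon> \<le> (p - 1) powr \<theta> * c * max 1 (\<integral>x. a x \<partial>lebesgue)"
    if "\<epsilon> \<in> {0<..p - 1}" for \<epsilon>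
  proof -
    have "\<epsilon> powr \<theta> \<le> (p - 1) powr \<theta>"
      using that theta_pos by (intro powr_mono2) auto
    then have "\<epsilon> powr \<theta> * c * max 1 (\<integral>x. a x \<partial>lebesgue) \<le> (p - 1) powr \<theta> * c * max 1 (\<integral>x. a x \<partial>lebesgue)"
      using c by (intro mult_right_mono) auto
    with gl_term_dominated_le[OF f_meas c dom] that show ?thesis by force
  qed
  show "in_GL p \<theta> a f"
    unfolding in_GL_def
  proof (intro conjI ballI f_meas)
    show "integrable lebesgue (\<lambda>x. \<bar>f x\<bar> powr (p - \<epsilon>) * a x powr (\<epsilon> / p))"
      if "\<epsilon> \<in> {0<..p - 1}" for \<epsilon>
      using integrable_dominated_powr[OF f_meas c dom] that by simp
    show "bdd_above (gl_term p \<theta> a f ` {0<..p - 1})"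
      using gl_le by (rule bdd_aboveI2)
  qed
  show "GL_norm p \<theta> a f \<le> (p - 1) powr \<theta> * c * max 1 (\<integral>x. a x \<partial>lebesgue)"
    unfolding GL_norm_def using p_gt_1 gl_le by (intro cSUP_least) auto
qed

lemma gl_term_le_GL_norm:
  assumes "in_GL p \<theta> a f" and "\<epsilon> \<in> {0<..p - 1}"
  shows "gl_term p \<theta> a f \<epsilon> \<le> GL_norm p \<theta> a f"
  using assms unfolding in_GL_def GL_norm_def by (blast intro: cSUP_upper)

definition limit_functional :: "real filter \<Rightarrow> (real \<Rightarrow> real) \<Rightarrow> real" where
  "limit_functional U f = Lim U (\<lambda>\<epsilon>. approx_functional \<epsilon> f)"

lemma eventually_small_at_right: "eventually (\<lambda>\<epsilon>. 0 < \<epsilon> \<and> \<epsilon> < p - 1) (at_right 0)"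
  unfolding eventually_at_right_field using p_gt_1 by (intro exI[of _ "p - 1"]) auto

context
  fixes U :: "real filter"
  assumes U_le: "U \<le> at_right 0" and U_ultra: "ultrafilter U"
begin

lemma U_proper: "U \<noteq> bot"
  using U_ultra by (simp add: ultrafilter_def)

lemma eventually_abs_approx_functional_le:
  assumes "in_GL p \<theta> a f"
  shows "eventually (\<lambda>\<epsilon>. \<bar>approx_functional \<epsilon> f\<bar> \<le> GL_norm p \<theta> a f) U"
  using filter_leD[OF U_le eventually_small_at_right]
  by (rule eventually_mono)
    (use assms in \<open>auto intro: order_trans[OF abs_approx_functional_le_gl_term gl_term_le_GL_norm]\<close>)

lemma tendsto_limit_functional:
  assumes "in_GL p \<theta> a f"
  shows "((\<lambda>\<epsilon>. approx_functional \<epsilon> f) \<longlongrightarrow> limit_functional U f) U"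
  unfolding limit_functional_def
  using U_ultra eventually_abs_approx_functional_le[OF assms] by (rule ultrafilter_tendsto_Lim)

lemma abs_limit_functional_le: "in_GL p \<theta> a f \<Longrightarrow> \<bar>limit_functional U f\<bar> \<le> GL_norm p \<theta> a f"
  using tendsto_rabs[OF tendsto_limit_functional] eventually_abs_approx_functional_le U_proper
  by (rule tendsto_upperbound)

lemma in_dual_limit_functional: "in_dual p \<theta> a (limit_functional U)"
  unfolding in_dual_def
proof (intro conjI allI impI exI[of _ 1])
  fix f g assume f: "in_GL p \<theta> a f" and g: "in_GL p \<theta> a g"
  have additive: "eventually (\<lambda>\<epsilon>. approx_functional \<epsilon> (\<lambda>x. f x + g x) = approx_functional \<epsilon> f + approx_functional \<epsilon> g) U"
    using filter_leD[OF U_le eventually_small_at_right]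
  proof (rule eventually_mono)
    fix \<epsilon> assume "0 < \<epsilon> \<and> \<epsilon> < p - 1"
    then have "integrable lebesgue (\<lambda>x. f x * a x powr (\<epsilon> / p))"
      and "integrable lebesgue (\<lambda>x. g x * a x powr (\<epsilon> / p))"
      using f g by (auto intro: in_GL_integrable_mult_weight_powr)
    then show "approx_functional \<epsilon> (\<lambda>x. f x + g x) = approx_functional \<epsilon> f + approx_functional \<epsilon> g"
      unfolding approx_functional_def by (simp add: distrib_right distrib_left)
  qed
  have "((\<lambda>\<epsilon>. approx_functional \<epsilon> (\<lambda>x. f x + g x)) \<longlongrightarrow> limit_functional U f + limit_functional U g) U"
    using tendsto_add[OF tendsto_limit_functional[OF f] tendsto_limit_functional[OF g]]
  proof (rule Lim_transform_eventually)
    show "eventually (\<lambda>\<epsilon>. approx_functional \<epsilon> f + approx_functional \<epsilon> g = approx_functional \<epsilon> (\<lambda>x. f x + g x)) U"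
      using additive by (rule eventually_mono) simp
  qed
  with U_proper show "limit_functional U (\<lambda>x. f x + g x) = limit_functional U f + limit_functional U g"
    unfolding limit_functional_def by (rule tendsto_Lim)
next
  fix f and c :: real assume f: "in_GL p \<theta> a f"
  have "((\<lambda>\<epsilon>. approx_functional \<epsilon> (\<lambda>x. c * f x)) \<longlongrightarrow> c * limit_functional U f) U"
    using tendsto_mult_left[OF tendsto_limit_functional[OF f], of c]
    by (simp add: approx_functional_def mult_ac)
  with U_proper show "limit_functional U (\<lambda>x. c * f x) = c * limit_functional U f"
    unfolding limit_functional_def by (rule tendsto_Lim)
next
  fix f assume "in_GL p \<theta> a f"
  then show "\<bar>limit_functional U f\<bar> \<le> 1 * GL_norm p \<theta> a f"
    by (simp add: abs_limit_functional_le)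
qed

lemma limit_functional_dominated:
  assumes f_meas: "f \<in> borel_measurable lebesgue" and c: "0 \<le> c"
    and dom: "\<And>x. \<bar>f x\<bar> \<le> c * a x"
  shows "limit_functional U f = 0"
proof -
  define M where "M = max 1 (\<integral>x. a x \<partial>lebesgue)"
  have "((\<lambda>\<epsilon>. approx_functional \<epsilon> f) \<longlongrightarrow> 0) (at_right 0)"
  proof (rule Lim_null_comparison)
    show "eventually (\<lambda>\<epsilon>. norm (approx_functional \<epsilon> f) \<le> \<epsilon> powr \<theta> * c * M) (at_right 0)"
      using eventually_small_at_right
    proof (rule eventually_mono)
      fix \<epsilon> assume \<epsilon>: "0 < \<epsilon> \<and> \<epsilon> < p - 1"
      then have "\<bar>approx_functional \<epsilon> f\<bar> \<le> gl_term p \<theta> a f \<epsilon>"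
        by (intro abs_approx_functional_le_gl_term in_GL_dominated[OF f_meas c dom]) auto
      also have "\<dots> \<le> \<epsilon> powr \<theta> * c * M"
        unfolding M_def using \<epsilon> by (intro gl_term_dominated_le[OF f_meas c dom]) auto
      finally show "norm (approx_functional \<epsilon> f) \<le> \<epsilon> powr \<theta> * c * M" by simp
    qed
    have "((\<lambda>\<epsilon>::real. \<epsilon> powr \<theta>) \<longlongrightarrow> 0) (at_right 0)"
      using theta_pos eventually_at_right_less[of "0::real"]
      by (intro tendsto_zero_powrI) (auto elim: eventually_mono)
    then show "((\<lambda>\<epsilon>. \<epsilon> powr \<theta> * c * M) \<longlongrightarrow> 0) (at_right 0)"
      by (auto intro!: tendsto_mult_left_zero)
  qed
  then have "((\<lambda>\<epsilon>. approx_functional \<epsilon> f) \<longlongrightarrow> 0) U"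
    using U_le by (rule tendsto_mono[rotated])
  with U_proper show ?thesis
    unfolding limit_functional_def by (rule tendsto_Lim)
qed

lemma limit_functional_one_ge:
  assumes "in_GL p \<theta> a (\<lambda>x. 1)" and "eventually (\<lambda>\<epsilon>. \<delta> \<le> gl_term p \<theta> a (\<lambda>x. 1) \<epsilon>) (at_right 0)"
  shows "\<delta> \<le> limit_functional U (\<lambda>x. 1)"
proof (rule tendsto_lowerbound[OF tendsto_limit_functional[OF assms(1)] _ U_proper])
  show "eventually (\<lambda>\<epsilon>. \<delta> \<le> approx_functional \<epsilon> (\<lambda>x. 1)) U"
    using filter_leD[OF U_le eventually_conj[OF assms(2) eventually_small_at_right]]
    by (rule eventually_mono) (simp add: approx_functional_one)
qed

end

lemma in_assoc_ae_zero_if_orthogonal_to_dominated: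
  assumes g: "in_assoc p \<theta> a g"
    and orth: "\<And>f c. f \<in> borel_measurable lebesgue \<Longrightarrow> 0 \<le> c \<Longrightarrow> (\<And>x. \<bar>f x\<bar> \<le> c * a x)
      \<Longrightarrow> (\<integral>x. f x * g x \<partial>lebesgue) = 0"
  shows "AE x in lebesgue. g x = 0"
proof -
  have [measurable]: "g \<in> borel_measurable lebesgue"
    using g unfolding in_assoc_def by simp
  define c where "c = 1 / ((p - 1) powr \<theta> * max 1 (\<integral>x. a x \<partial>lebesgue))"
  have "0 < c" unfolding c_def using p_gt_1 by simp
  define f where "f = (\<lambda>x. c * sgn (g x) * a x)"
  have f_meas: "f \<in> borel_measurable lebesgue" unfolding f_def by measurable
  have dom: "\<bar>f x\<bar> \<le> c * a x" for x
    unfolding f_def using \<open>0 < c\<close> weight_pos[of x] by (simp add: abs_mult abs_sgn_eq)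
  have "GL_norm p \<theta> a f \<le> 1"
    using GL_norm_dominated_le[OF f_meas _ dom] \<open>0 < c\<close> p_gt_1 unfolding c_def
    by (simp split: if_splits)
  then have fg_int: "integrable lebesgue (\<lambda>x. f x * g x)"
    using g in_GL_dominated[OF f_meas _ dom] \<open>0 < c\<close> unfolding in_assoc_def by auto
  have fg_eq: "f x * g x = c * a x * \<bar>g x\<bar>" for x
    unfolding f_def by (simp add: abs_sgn mult_ac)
  have "AE x in lebesgue. f x * g x = 0"
    using orth[OF f_meas _ dom] \<open>0 < c\<close> fg_int weight_pos
    by (subst integral_nonneg_eq_0_iff_AE[symmetric]) (auto simp: fg_eq less_imp_le)
  then show ?thesis
    by (rule eventually_mono) (use \<open>0 < c\<close> weight_pos in \<open>simp add: fg_eq less_imp_neq[symmetric]\<close>)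
qed

theorem not_canonically_isometric:
  assumes one: "in_GL p \<theta> a (\<lambda>x. 1)" and "0 < \<delta>"
    and lower: "eventually (\<lambda>\<epsilon>. \<delta> \<le> gl_term p \<theta> a (\<lambda>x. 1) \<epsilon>) (at_right 0)"
  shows "\<not> canonically_isometric p \<theta> a"
proof
  assume iso: "canonically_isometric p \<theta> a"
  obtain U :: "real filter" where U: "U \<le> at_right 0" "ultrafilter U"
    using ultrafilter_le_exists[of "at_right (0::real)"] by auto
  then obtain g where g: "in_assoc p \<theta> a g"
    and rep: "\<And>f. in_GL p \<theta> a f \<Longrightarrow> limit_functional U f = (\<integral>x. f x * g x \<partial>lebesgue)"
    using iso in_dual_limit_functional unfolding canonically_isometric_def by blast
  have "AE x in lebesgue. g x = 0"
    using g by (rule in_assoc_ae_zero_if_orthogonal_to_dominated)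
      (metis U rep in_GL_dominated limit_functional_dominated)
  then have "limit_functional U (\<lambda>x. 1) = 0"
    unfolding rep[OF one] by (simp add: integral_eq_zero_AE)
  moreover have "\<delta> \<le> limit_functional U (\<lambda>x. 1)"
    using U one lower by (rule limit_functional_one_ge)
  ultimately show False
    using \<open>0 < \<delta>\<close> by simp
qed

end

definition exp_weight :: "real \<Rightarrow> real \<Rightarrow> real \<Rightarrow> real" where
  "exp_weight p \<theta> x = exp (- (\<bar>x\<bar> powr (1 / (\<theta> * p))))"

lemma grand_Lebesgue_weight_exp_weight:
  assumes "1 < p" "0 < \<theta>"
  shows "grand_Lebesgue_weight p \<theta> (exp_weight p \<theta>)"
  using assms unfolding exp_weight_def
  by unfold_locales (auto intro: integrable_exp_neg_abs_powr_powr)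

lemma gl_term_one_exp_weight:
  assumes p: "1 < p" and \<theta>: "0 < \<theta>" and \<epsilon>: "0 < \<epsilon>" "\<epsilon> < p"
  shows "gl_term p \<theta> (exp_weight p \<theta>) (\<lambda>x. 1) \<epsilon>
    = exp ((ln (\<integral>x. exp_weight p \<theta> x \<partial>lebesgue) + \<theta> * p * ln p - \<theta> * (\<epsilon> * ln \<epsilon>)) / (p - \<epsilon>))"
proof -
  define C where "C = (\<integral>x. exp_weight p \<theta> x \<partial>lebesgue)"
  interpret grand_Lebesgue_weight p \<theta> "exp_weight p \<theta>"
    using p \<theta> by (rule grand_Lebesgue_weight_exp_weight)
  have "0 < C"
    unfolding C_def using integrable_weight weight_pos by (rule integral_lebesgue_pos)
  have mass: "weight_mass \<epsilon> = (\<epsilon> / p) powr (- (\<theta> * p)) * C"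
    unfolding weight_mass_def C_def exp_weight_def
    using p \<theta> \<epsilon> by (subst integral_exp_neg_abs_powr_powr) auto
  have "gl_term p \<theta> (exp_weight p \<theta>) (\<lambda>x. 1) \<epsilon> = \<epsilon> powr \<theta> * weight_mass \<epsilon> powr (1 / (p - \<epsilon>))"
    unfolding gl_term_def weight_mass_def by simp
  also have "\<dots> = exp (\<theta> * ln \<epsilon> + (- (\<theta> * p) * (ln \<epsilon> - ln p) + ln C) / (p - \<epsilon>))"
    using p \<epsilon> \<open>0 < C\<close> weight_mass_pos[OF \<epsilon>(1)]
    by (simp add: powr_def mass ln_mult ln_powr ln_div exp_add)
  also have "\<theta> * ln \<epsilon> + (- (\<theta> * p) * (ln \<epsilon> - ln p) + ln C) / (p - \<epsilon>)
      = (ln C + \<theta> * p * ln p - \<theta> * (\<epsilon> * ln \<epsilon>)) / (p - \<epsilon>)"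
    using \<epsilon> by (simp add: field_simps)
  finally show ?thesis unfolding C_def .
qed

lemma
  fixes p \<theta> :: real
  defines "K \<equiv> ln (\<integral>x. exp_weight p \<theta> x \<partial>lebesgue) + \<theta> * p * ln p"
  assumes p: "1 < p" and \<theta>: "0 < \<theta>" and \<epsilon>: "0 < \<epsilon>" "\<epsilon> \<le> p - 1"
  shows gl_term_one_exp_weight_le: "gl_term p \<theta> (exp_weight p \<theta>) (\<lambda>x. 1) \<epsilon> \<le> exp (\<bar>K\<bar> + \<theta>)"
    and gl_term_one_exp_weight_ge: "\<epsilon> \<le> 1 \<Longrightarrow> exp (- \<bar>K\<bar>) \<le> gl_term p \<theta> (exp_weight p \<theta>) (\<lambda>x. 1) \<epsilon>"
proof -
  define N where "N = K - \<theta> * (\<epsilon> * ln \<epsilon>)"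
  have gl_eq: "gl_term p \<theta> (exp_weight p \<theta>) (\<lambda>x. 1) \<epsilon> = exp (N / (p - \<epsilon>))"
    unfolding N_def K_def using p \<theta> \<epsilon> by (simp add: gl_term_one_exp_weight diff_diff_eq2)
  have "1 \<le> p - \<epsilon>" using \<epsilon> by simp
  have "- ln \<epsilon> \<le> 1 / \<epsilon> - 1"
    using ln_le_minus_one[of "1 / \<epsilon>"] \<epsilon> by (simp add: ln_div)
  then have "\<epsilon> * (- ln \<epsilon>) \<le> \<epsilon> * (1 / \<epsilon> - 1)"
    using \<epsilon> by (intro mult_left_mono) auto
  then have "\<theta> * (- (\<epsilon> * ln \<epsilon>)) \<le> \<theta> * 1"
    using \<epsilon> \<theta> by (intro mult_left_mono) (auto simp: right_diff_distrib)
  then have "N \<le> \<bar>K\<bar> + \<theta>"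
    unfolding N_def by linarith
  then show "gl_term p \<theta> (exp_weight p \<theta>) (\<lambda>x. 1) \<epsilon> \<le> exp (\<bar>K\<bar> + \<theta>)"
    unfolding gl_eq using divide_between_min_max(2)[OF \<open>1 \<le> p - \<epsilon>\<close>, of N] \<theta> by simp
  assume "\<epsilon> \<le> 1"
  then have "\<epsilon> * ln \<epsilon> \<le> 0"
    using \<epsilon> by (simp add: mult_nonneg_nonpos)
  then have "\<theta> * (\<epsilon> * ln \<epsilon>) \<le> 0"
    using \<theta> by (simp add: mult_nonneg_nonpos)
  then have "- \<bar>K\<bar> \<le> N"
    unfolding N_def by linarith
  then show "exp (- \<bar>K\<bar>) \<le> gl_term p \<theta> (exp_weight p \<theta>) (\<lambda>x. 1) \<epsilon>"
    unfolding gl_eq using divide_between_min_max(1)[OF \<open>1 \<le> p - \<epsilon>\<close>, of N] by simp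
qed

lemma in_GL_one_exp_weight:
  assumes p: "1 < p" and \<theta>: "0 < \<theta>"
  shows "in_GL p \<theta> (exp_weight p \<theta>) (\<lambda>x. 1)"
  unfolding in_GL_def
proof (intro conjI ballI)
  interpret grand_Lebesgue_weight p \<theta> "exp_weight p \<theta>"
    using p \<theta> by (rule grand_Lebesgue_weight_exp_weight)
  show "integrable lebesgue (\<lambda>x. \<bar>1\<bar> powr (p - \<epsilon>) * exp_weight p \<theta> x powr (\<epsilon> / p))"
    if "\<epsilon> \<in> {0<..p - 1}" for \<epsilon>
    using that p by (simp add: integrable_weight_powr)
  show "bdd_above (gl_term p \<theta> (exp_weight p \<theta>) (\<lambda>x. 1) ` {0<..p - 1})"
    using gl_term_one_exp_weight_le[OF p \<theta>] by (intro bdd_aboveI2) auto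
qed simp

lemma gl_term_one_exp_weight_bounded_below:
  assumes "1 < p" and "0 < \<theta>"
  shows "\<exists>\<delta>>0. eventually (\<lambda>\<epsilon>. \<delta> \<le> gl_term p \<theta> (exp_weight p \<theta>) (\<lambda>x. 1) \<epsilon>) (at_right 0)"
proof (intro exI conjI)
  have "eventually (\<lambda>\<epsilon>. 0 < \<epsilon> \<and> \<epsilon> \<le> 1 \<and> \<epsilon> \<le> p - 1) (at_right 0)"
    unfolding eventually_at_right_field using assms by (intro exI[of _ "min 1 (p - 1)"]) auto
  then show "eventually (\<lambda>\<epsilon>. exp (- \<bar>ln (\<integral>x. exp_weight p \<theta> x \<partial>lebesgue) + \<theta> * p * ln p\<bar>)
      \<le> gl_term p \<theta> (exp_weight p \<theta>) (\<lambda>x. 1) \<epsilon>) (at_right 0)"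
    by (rule eventually_mono) (use gl_term_one_exp_weight_ge[OF assms] in auto)
qed simp

theorem corollary3:
  fixes p \<theta> :: real
  assumes "1 < p" and "0 < \<theta>"
  shows "\<exists>a. weight a \<and> \<not> canonically_isometric p \<theta> a"
proof -
  interpret grand_Lebesgue_weight p \<theta> "exp_weight p \<theta>"
    using assms by (rule grand_Lebesgue_weight_exp_weight)
  obtain \<delta> where "0 < \<delta>"
    and "eventually (\<lambda>\<epsilon>. \<delta> \<le> gl_term p \<theta> (exp_weight p \<theta>) (\<lambda>x. 1) \<epsilon>) (at_right 0)"
    using gl_term_one_exp_weight_bounded_below[OF assms] by blast
  then have "\<not> canonically_isometric p \<theta> (exp_weight p \<theta>)"
    by (intro not_canonically_isometric in_GL_one_exp_weight assms)
  then show ?thesis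
    using weight_a by blast
qed

end
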